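(* Let $b$ be a positive integer. The Frobenius endomorphism $F_b:\mathbb Z[1/b][q]^{\mathbb N_b}\to\mathbb Z[1/b][q]^{\mathbb N_b}$, induced by $q\mapsto q^b$, is a well-defined algebra isomorphism.
   Context: $\mathbb N_b=\{n\in\mathbb N:(n,b)=1\}$. For $S\subset\mathbb N$, $\mathbb Z[1/b][q]^S=\varprojlim_{f\in\Phi^*_S}\mathbb Z[1/b][q]/(f)$, where $\Phi^*_S$ is the multiplicative set generated by the cyclotomic polynomials $\Phi_n(q)$, $n\in S$, directed by divisibility. $F_b$ is the inverse limit of the maps $\mathbb Z[1/b][q]/(\prod_i\Phi_{n_i}^{k_i})\to\mathbb Z[1/b][q]/(\prod_i\Phi_{n_i}^{k_i})$, $q\mapsto q^b$, for finitely many $n_i\in\mathbb N_b$, $k_i\in\mathbb N$. *)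

theory Defs
  imports "HOL-Computational_Algebra.Computational_Algebra"
begin

text \<open>Cyclotomic polynomials over the rationals, via the standard recursion
  q^n - 1 = prod over d dvd n of Phi_d (for n \<ge> 1; Phi_0 is a dummy value 1).\<close>
function cyclo :: "nat \<Rightarrow> rat poly" where
  "cyclo n = (if n = 0 then 1
              else (monom 1 n - 1) div (\<Prod>d\<in>{d. d dvd n \<and> d < n}. cyclo d))"
  by pat_completeness auto
termination
  by (relation "measure id") auto

declare cyclo.simps[simp del]

definition Nb :: "nat \<Rightarrow> nat set" where
  "Nb b = {n. n \<ge> 1 \<and> coprime n b}"

definition Zb :: "nat \<Rightarrow> rat set" where
  "Zb b = {r. \<exists>(a::int) (k::nat). r = of_int a / of_nat (b ^ k)}"

definition Zbq :: "nat \<Rightarrow> rat poly set" where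
  "Zbq b = {p. \<forall>i. coeff p i \<in> Zb b}"

definition dvdb :: "nat \<Rightarrow> rat poly \<Rightarrow> rat poly \<Rightarrow> bool" where
  "dvdb b f p \<longleftrightarrow> (\<exists>h\<in>Zbq b. p = f * h)"

definition PhiStar :: "nat set \<Rightarrow> rat poly set" where
  "PhiStar S = {f. \<exists>ns. set ns \<subseteq> S \<and> f = prod_list (map cyclo ns)}"

text \<open>Elements of the inverse limit Z[1/b][q]^S: compatible families
  (x_f)_{f in Phi*_S} with x_f in Z[1/b][q] representing a class mod (f);
  the transition maps for f | g are reduction mod f.\<close>
definition invlim :: "nat \<Rightarrow> nat set \<Rightarrow> (rat poly \<Rightarrow> rat poly) set" where
  "invlim b S = {x. (\<forall>f\<in>PhiStar S. x f \<in> Zbq b) \<and>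
     (\<forall>f\<in>PhiStar S. \<forall>g\<in>PhiStar S. dvdb b f g \<longrightarrow> dvdb b f (x g - x f))}"

definition limeq :: "nat \<Rightarrow> nat set \<Rightarrow> (rat poly \<Rightarrow> rat poly) \<Rightarrow> (rat poly \<Rightarrow> rat poly) \<Rightarrow> bool" where
  "limeq b S x y \<longleftrightarrow> (\<forall>f\<in>PhiStar S. dvdb b f (x f - y f))"

definition frob_poly :: "nat \<Rightarrow> rat poly \<Rightarrow> rat poly" where
  "frob_poly b p = pcompose p (monom 1 b)"

definition Frob :: "nat \<Rightarrow> (rat poly \<Rightarrow> rat poly) \<Rightarrow> (rat poly \<Rightarrow> rat poly)" where
  "Frob b x = (\<lambda>f. frob_poly b (x f))"

end

theory Submission
  imports Defs
begin

text \<open>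
  Every f in Phi*_{N_b} is a monic product of cyclotomic polynomials with
  integer coefficients, and for monic f in Z[1/b][q] divisibility by f inside Z[1/b][q] is the
  same as divisibility in Q[q].  So all statements reduce to divisibility in Q[q], which we test
  through root multiplicities over the complex numbers: f = Phi_{n_1} ... Phi_{n_k} vanishes at a
  to the order #{i. a is a primitive n_i-th root of unity}, and since each n_i is coprime to b,
  the map a \<mapsto> a^b permutes the primitive n_i-th roots.  As the order of a in p(q^b) equals the
  order of a^b in p, this gives  f | f(q^b)  (the Frobenius respects every level) and
  f | p(q^b) \<Longrightarrow> f | p  (it is injective on every level).
  Surjectivity is algebraic: for coprime b and N a Hensel-type construction produces
  u in Z[1/b][q] with (q^N - 1)^K | u(q^b) - q; taking N = n_1 \<cdots> n_k this gives
  f | u(q^b) - q, and x_f = y_f(u) is a preimage of y_f.  Additivity, multiplicativity and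
  Z[1/b]-linearity hold on the nose because composition is a ring homomorphism.
\<close>

section \<open>The ring Z[1/b]\<close>

lemma Zb_int: "of_int a \<in> Zb b"
  unfolding Zb_def by (rule CollectI, rule exI[of _ a], rule exI[of _ 0]) simp

lemma Zb_0: "0 \<in> Zb b" using Zb_int[of 0] by simp
lemma Zb_1: "1 \<in> Zb b" using Zb_int[of 1] by simp

lemma Zb_add: assumes "b \<ge> 1" "x \<in> Zb b" "y \<in> Zb b" shows "x + y \<in> Zb b"
proof -
  obtain a k where x: "x = of_int a / of_nat (b^k)" using assms unfolding Zb_def by auto
  obtain c l where y: "y = of_int c / of_nat (b^l)" using assms unfolding Zb_def by auto
  have "x + y = of_int (a * int (b^l) + c * int (b^k)) / of_nat (b^(k+l))"
    using assms(1) by (simp add: x y field_simps power_add)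
  thus ?thesis unfolding Zb_def by blast
qed

lemma Zb_mult: assumes "b \<ge> 1" "x \<in> Zb b" "y \<in> Zb b" shows "x * y \<in> Zb b"
proof -
  obtain a k where x: "x = of_int a / of_nat (b^k)" using assms unfolding Zb_def by auto
  obtain c l where y: "y = of_int c / of_nat (b^l)" using assms unfolding Zb_def by auto
  have "x * y = of_int (a * c) / of_nat (b^(k+l))"
    using assms(1) by (simp add: x y field_simps power_add)
  thus ?thesis unfolding Zb_def by blast
qed

lemma Zb_uminus: assumes "x \<in> Zb b" shows "- x \<in> Zb b"
proof -
  obtain a k where x: "x = of_int a / of_nat (b^k)" using assms unfolding Zb_def by auto
  have "- x = of_int (- a) / of_nat (b^k)" by (simp add: x)
  thus ?thesis unfolding Zb_def by blast
qed

lemma Zb_diff: assumes "b \<ge> 1" "x \<in> Zb b" "y \<in> Zb b" shows "x - y \<in> Zb b"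
  using Zb_add[OF assms(1,2) Zb_uminus[OF assms(3)]] by simp

lemma Zb_divide_power: assumes "b \<ge> 1" "x \<in> Zb b" shows "x / of_nat b ^ K \<in> Zb b"
proof -
  obtain a k where x: "x = of_int a / of_nat (b^k)" using assms unfolding Zb_def by auto
  have "x / of_nat b ^ K = of_int a / of_nat (b^(k+K))"
    using assms(1) by (simp add: x field_simps power_add)
  thus ?thesis unfolding Zb_def by blast
qed

lemma Zb_one_subset: "x \<in> Zb 1 \<Longrightarrow> x \<in> Zb b"
  unfolding Zb_def by (auto intro: Zb_int[unfolded Zb_def, simplified])

section \<open>The ring Z[1/b][q]\<close>

lemma Zbq_iff: "p \<in> Zbq b \<longleftrightarrow> (\<forall>i. coeff p i \<in> Zb b)" unfolding Zbq_def by simp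

lemma Zbq_0: "0 \<in> Zbq b" by (simp add: Zbq_iff Zb_0)
lemma Zbq_1: "1 \<in> Zbq b" by (simp add: Zbq_iff Zb_0 Zb_1 coeff_1)
lemma Zbq_monom: "c \<in> Zb b \<Longrightarrow> monom c n \<in> Zbq b"
  by (auto simp: Zbq_iff Zb_0 coeff_monom)
lemma Zbq_linear: "[:of_int a, 1:] \<in> Zbq b"
  by (auto simp: Zbq_iff coeff_pCons Zb_int Zb_1 Zb_0 split: nat.splits)
lemma Zbq_add: "b \<ge> 1 \<Longrightarrow> p \<in> Zbq b \<Longrightarrow> q \<in> Zbq b \<Longrightarrow> p + q \<in> Zbq b"
  by (auto simp: Zbq_iff intro: Zb_add)
lemma Zbq_diff: "b \<ge> 1 \<Longrightarrow> p \<in> Zbq b \<Longrightarrow> q \<in> Zbq b \<Longrightarrow> p - q \<in> Zbq b"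
  by (auto simp: Zbq_iff intro: Zb_diff)
lemma Zbq_mult: "b \<ge> 1 \<Longrightarrow> p \<in> Zbq b \<Longrightarrow> q \<in> Zbq b \<Longrightarrow> p * q \<in> Zbq b"
  unfolding Zbq_iff
  by (intro allI coeff_mult_semiring_closed[of "Zb b"]) (auto intro: Zb_0 Zb_add Zb_mult)
lemma Zbq_pcompose: "b \<ge> 1 \<Longrightarrow> p \<in> Zbq b \<Longrightarrow> q \<in> Zbq b \<Longrightarrow> pcompose p q \<in> Zbq b"
  unfolding Zbq_iff
  by (intro allI coeff_pcompose_semiring_closed[of "Zb b"]) (auto intro: Zb_0 Zb_add Zb_mult)
lemma Zbq_power: "b \<ge> 1 \<Longrightarrow> p \<in> Zbq b \<Longrightarrow> p ^ n \<in> Zbq b"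
  by (induction n) (auto intro: Zbq_1 Zbq_mult)
lemma Zbq_sum: "b \<ge> 1 \<Longrightarrow> (\<And>i. i \<in> A \<Longrightarrow> f i \<in> Zbq b) \<Longrightarrow> sum f A \<in> Zbq b"
  by (induction A rule: infinite_finite_induct) (auto intro: Zbq_0 Zbq_add)
lemma Zbq_prod: "b \<ge> 1 \<Longrightarrow> (\<And>i. i \<in> A \<Longrightarrow> f i \<in> Zbq b) \<Longrightarrow> prod f A \<in> Zbq b"
  by (induction A rule: infinite_finite_induct) (auto intro: Zbq_1 Zbq_mult)
lemma Zbq_one_subset: "p \<in> Zbq 1 \<Longrightarrow> p \<in> Zbq b"
  by (auto simp: Zbq_iff intro: Zb_one_subset)

text \<open>Exact division by a monic polynomial does not leave Z[1/b][q]; proved by peeling off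
  the leading term of the cofactor.\<close>
lemma Zbq_cofactor_of_monic:
  assumes b: "b \<ge> 1" and f: "f \<in> Zbq b" "lead_coeff f = 1"
  shows "p \<in> Zbq b \<Longrightarrow> p = f * h \<Longrightarrow> h \<in> Zbq b"
proof (induction "degree h" arbitrary: h p rule: less_induct)
  case less
  show ?case
  proof (cases "h = 0")
    case True thus ?thesis by (simp add: Zbq_0)
  next
    case False
    have "lead_coeff p = lead_coeff h" using less.prems f(2) by (simp add: lead_coeff_mult)
    hence lc: "lead_coeff h \<in> Zb b" using less.prems(1) unfolding Zbq_iff by metis
    define m where "m = monom (lead_coeff h) (degree h)"
    define h' where "h' = h - m"
    have m: "m \<in> Zbq b" using lc by (simp add: m_def Zbq_monom)
    have eq: "p - f * m = f * h'" using less.prems by (simp add: h'_def algebra_simps)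
    have pm: "p - f * m \<in> Zbq b" using less.prems m f Zbq_mult Zbq_diff b by auto
    have "h' \<in> Zbq b"
    proof (cases "degree h = 0")
      case True
      then have "h' = 0" unfolding h'_def m_def
        by (metis True cancel_comm_monoid_add_class.diff_cancel degree_0_id monom_0)
      thus ?thesis by (simp add: Zbq_0)
    next
      case False
      have "\<forall>i>degree h - 1. coeff h' i = 0"
      proof (intro allI impI)
        fix i assume "i > degree h - 1"
        hence "i \<ge> degree h" using False by linarith
        thus "coeff h' i = 0" unfolding h'_def m_def
          by (cases "i = degree h") (auto simp: coeff_monom coeff_eq_0)
      qed
      hence "degree h' \<le> degree h - 1" by (intro degree_le) auto
      hence "degree h' < degree h" using False by linarith
      thus ?thesis using less.hyps[OF _ pm eq] by blast
    qed
    moreover have "h = h' + m" by (simp add: h'_def)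
    ultimately show ?thesis using m Zbq_add b by auto
  qed
qed

lemma dvdb_iff_dvd:
  assumes b: "b \<ge> 1" and f: "f \<in> Zbq b" "lead_coeff f = 1" and p: "p \<in> Zbq b"
  shows "dvdb b f p \<longleftrightarrow> f dvd p"
  using Zbq_cofactor_of_monic[OF b f p] unfolding dvdb_def by (auto elim!: dvdE)

lemma dvdb_imp_dvd: "dvdb b f p \<Longrightarrow> f dvd p" unfolding dvdb_def by auto

lemma monom_one_eq_X_power: "monom (1::'a::comm_semiring_1) n = [:0,1:]^n"
  by (simp add: monom_altdef)

lemma pcompose_power_left: "pcompose (p ^ n) q = pcompose p q ^ n"
  by (induction n) (simp_all add: pcompose_1 pcompose_mult)

lemma pcompose_X_left: "pcompose [:0,1:] (q::'a::comm_semiring_1 poly) = q"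
  by (simp add: pcompose_pCons)

lemma pcompose_monom_one: "pcompose (monom 1 n) q = q ^ n"
  by (simp add: monom_one_eq_X_power pcompose_power_left pcompose_X_left)

lemma pcompose_monom: "pcompose (monom c n) q = smult c (q ^ n)"
  by (simp add: monom_altdef pcompose_smult pcompose_power_left pcompose_X_left)

lemma pcompose_shift_down: "pcompose [:-1,1:] q = q - (1::'a::comm_ring_1 poly)"
proof -
  have "[:-1:] = -(1::'a poly)" by (simp add: one_pCons)
  thus ?thesis by (simp add: pcompose_pCons)
qed

lemma pcompose_diff_dvd: "(a - a') dvd (pcompose p a - pcompose p (a'::'a::comm_ring_1 poly))"
proof (induction p)
  case 0 then show ?case by simp
next
  case (pCons c p)
  have "pcompose (pCons c p) a - pcompose (pCons c p) a' =
        a * (pcompose p a - pcompose p a') + (a - a') * pcompose p a'"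
    by (simp add: pcompose_pCons algebra_simps)
  then show ?case using pCons.IH by (simp add: dvd_add)
qed

lemma X_power_minus_1_dvd:
  assumes "n dvd N" shows "(monom 1 n - 1 :: 'a::comm_ring_1 poly) dvd monom 1 N - 1"
proof -
  obtain k where k: "N = n * k" using assms by (auto elim: dvdE)
  have "monom (1::'a) N = monom 1 n ^ k" by (simp add: monom_power k)
  thus ?thesis by (simp add: power_diff_1_eq[of "monom (1::'a) n" k])
qed

section \<open>A Frobenius preimage of q modulo (q^N - 1)^K\<close>

text \<open>Let s = (1+t)^b - 1 = t e(t) with e(0) = b.  As b is a unit of Z[1/b], every r in
  Z[1/b][t] agrees with some w(s) modulo t^K; w is built one coefficient at a time.\<close>
lemma substitution_surjective_mod_X_power:
  fixes r :: "rat poly"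
  assumes b: "b \<ge> 1" and r: "r \<in> Zbq b"
  shows "\<exists>w\<in>Zbq b. monom 1 K dvd (r - pcompose w ([:1,1:]^b - 1))"
proof (induction K)
  case 0 then show ?case by (intro bexI[of _ 0]) (auto simp: Zbq_0)
next
  case (Suc K)
  define s where "s = ([:1,1:]^b - 1 :: rat poly)"
  obtain w where w: "w \<in> Zbq b" "monom 1 K dvd (r - pcompose w s)" using Suc s_def by auto
  obtain h where h: "r - pcompose w s = monom 1 K * h" using w(2) by (auto elim: dvdE)
  define e where "e = (\<Sum>i<b. [:1,1:]^i :: rat poly)"
  have se: "s = [:0,1:] * e"
    unfolding s_def e_def power_diff_1_eq[of "[:1,1:]" b] by (simp add: one_pCons)
  have sK: "s^K = monom 1 K * e^K" by (simp only: se power_mult_distrib monom_one_eq_X_power)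
  have "r - pcompose w s \<in> Zbq b"
    using r w(1) b by (auto intro!: Zbq_diff Zbq_pcompose Zbq_power Zbq_1 Zbq_linear[of 1, simplified]
                            simp: s_def)
  moreover have "coeff (r - pcompose w s) K = coeff h 0" using h by (simp add: coeff_monom_mult)
  ultimately have "coeff h 0 \<in> Zb b" by (metis Zbq_iff)
  define c where "c = coeff h 0 / of_nat b ^ K"
  have c: "c \<in> Zb b" unfolding c_def using Zb_divide_power[OF b \<open>coeff h 0 \<in> Zb b\<close>] by simp
  define w' where "w' = w + monom c K"
  have w': "w' \<in> Zbq b" unfolding w'_def using w(1) c b by (auto intro: Zbq_add Zbq_monom)
  have r_w': "r - pcompose w' s = monom 1 K * (h - smult c (e^K))"
    using h by (simp add: w'_def pcompose_add pcompose_monom sK algebra_simps)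
  have "poly (e^K) 0 = of_nat b ^ K" by (simp add: e_def poly_sum)
  hence "poly (h - smult c (e^K)) 0 = 0" using b by (simp add: c_def poly_0_coeff_0)
  then obtain g where "h - smult c (e^K) = [:0,1:] * g"
    using poly_eq_0_iff_dvd[of "h - smult c (e^K)" 0] by (auto elim: dvdE)
  with r_w' have "r - pcompose w' s = monom 1 (Suc K) * g"
    by (simp add: monom_one_eq_X_power mult.assoc)
  thus ?case using w' s_def by (intro bexI[of _ w']) (auto intro: dvdI)
qed

text \<open>Substituting t = q - 1: the Frobenius is surjective modulo (q - 1)^K.\<close>
lemma frob_surjective_mod_q_minus_1_power:
  fixes R :: "rat poly"
  assumes b: "b \<ge> 1" and R: "R \<in> Zbq b"
  shows "\<exists>V\<in>Zbq b. [:-1,1:]^K dvd (R - pcompose V (monom 1 b))"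
proof -
  define s where "s = ([:1,1:]^b - 1 :: rat poly)"
  define m1 where "m1 = ([:-1,1:] :: rat poly)"
  have "pcompose R [:1,1:] \<in> Zbq b"
    using R b by (auto intro: Zbq_pcompose Zbq_linear[of 1, simplified])
  then obtain w where w: "w \<in> Zbq b" "monom 1 K dvd pcompose R [:1,1:] - pcompose w s"
    using substitution_surjective_mod_X_power[OF b] s_def by blast
  then obtain h where h: "pcompose R [:1,1:] - pcompose w s = monom 1 K * h" by (auto elim: dvdE)
  have shift: "pcompose [:1,1:] m1 = [:0,1:]" by (simp add: m1_def pcompose_pCons one_pCons)
  have "pcompose (pcompose R [:1,1:] - pcompose w s) m1 = pcompose (monom 1 K * h) m1"
    using h by simp
  hence "R - pcompose w (pcompose s m1) = m1^K * pcompose h m1"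
    by (simp add: pcompose_diff pcompose_assoc[symmetric] shift pcompose_mult pcompose_monom_one)
  moreover have "pcompose s m1 = monom 1 b - 1"
    by (simp add: s_def pcompose_diff pcompose_power_left shift pcompose_1 monom_one_eq_X_power)
  moreover have "pcompose w (monom 1 b - 1) = pcompose (pcompose w m1) (monom 1 b)"
    by (simp add: pcompose_assoc[symmetric] m1_def pcompose_shift_down)
  ultimately have "R - pcompose (pcompose w m1) (monom 1 b) = m1^K * pcompose h m1" by simp
  moreover have "pcompose w m1 \<in> Zbq b"
    using w(1) b by (auto simp: m1_def intro!: Zbq_pcompose Zbq_linear[of "-1", simplified])
  ultimately show ?thesis by (intro bexI[of _ "pcompose w m1"]) (auto simp: m1_def)
qed

text \<open>Substituting q \<mapsto> q^N, which commutes with q \<mapsto> q^b: surjectivity modulo (q^N - 1)^K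
  on the subring of polynomials in q^N.\<close>
lemma frob_surjective_mod_qN_minus_1_power:
  fixes R :: "rat poly"
  assumes b: "b \<ge> 1" and R: "R \<in> Zbq b"
  shows "\<exists>V\<in>Zbq b. (monom 1 N - 1)^K dvd
           (pcompose R (monom 1 N) - pcompose (pcompose V (monom 1 N)) (monom 1 b))"
proof -
  obtain V h where V: "V \<in> Zbq b" "R - pcompose V (monom 1 b) = [:-1,1:]^K * h"
    using frob_surjective_mod_q_minus_1_power[OF b R, of K] by (auto elim: dvdE)
  have "pcompose (R - pcompose V (monom 1 b)) (monom 1 N) = pcompose ([:-1,1:]^K * h) (monom 1 N)"
    using V by simp
  hence "pcompose R (monom 1 N) - pcompose V (pcompose (monom 1 b) (monom 1 N))
         = (monom 1 N - 1)^K * pcompose h (monom 1 N)"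
    by (simp add: pcompose_diff pcompose_mult pcompose_power_left pcompose_shift_down pcompose_assoc)
  moreover have "pcompose (monom 1 b) (monom 1 N) = pcompose (monom 1 N) (monom (1::rat) b)"
    by (simp add: pcompose_monom_one monom_power mult.commute)
  ultimately have "pcompose R (monom 1 N) - pcompose (pcompose V (monom 1 N)) (monom 1 b)
         = (monom 1 N - 1)^K * pcompose h (monom 1 N)"
    by (simp add: pcompose_assoc)
  thus ?thesis using V(1) by (intro bexI[of _ V]) (auto intro: dvdI)
qed

text \<open>The truncated geometric series Q = sum_{j<K} (1 - t)^j inverts t modulo (t - 1)^K,
  since 1 - t Q = (1 - t)^K; hence Q^m inverts t^m.\<close>
lemma truncated_geometric_inverse:
  fixes t :: "'a::comm_ring_1"
  shows "(t - 1)^K dvd 1 - (t * (\<Sum>j<K. (1 - t)^j))^m"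
proof -
  define Q where "Q = (\<Sum>j<K. (1 - t)^j)"
  have "1 - t * Q = (1 - t)^K" using one_diff_power_eq[of "1 - t" K] by (simp add: Q_def algebra_simps)
  moreover have "(t - 1) dvd (1 - t)" by (metis dvd_minus_iff dvd_refl minus_diff_eq)
  ultimately have "(t - 1)^K dvd (1 - t * Q)" by (metis dvd_power_same)
  moreover have "(1 - t * Q) dvd (1 - (t * Q)^m)"
    using one_diff_power_eq[of "t * Q" m] by (auto intro: dvdI)
  ultimately show ?thesis unfolding Q_def by (rule dvd_trans)
qed

text \<open>Writing bc = Nm + 1
  and T = q^N, take u = q^c V(T) where V(T)(q^b) is congruent to Q^m, the inverse of T^m
  modulo (T - 1)^K; then u(q^b) = q T^m V(T)(q^b) is congruent to q.\<close>
lemma frob_preimage_of_q_mod_qN_minus_1_power: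
  fixes b N K :: nat
  assumes b: "b \<ge> 1" and cop: "coprime b N"
  shows "\<exists>u\<in>Zbq b. (monom 1 N - 1)^K dvd (pcompose u (monom 1 b) - [:0,1:])"
proof -
  obtain c m where cm: "b * c = N * m + 1"
    using bezout_nat[of b N] b cop by (auto simp: coprime_iff_gcd_eq_1)
  define T where "T = (monom 1 N :: rat poly)"
  define Q0 where "Q0 = (\<Sum>j<K. (1 - [:0,1:])^j :: rat poly)"
  define Q where "Q = (\<Sum>j<K. (1 - T)^j)"
  have "Q0 ^ m \<in> Zbq b" unfolding Q0_def using b
    by (intro Zbq_power Zbq_sum Zbq_diff Zbq_1 Zbq_linear[of 0, simplified])
  moreover have "pcompose (Q0 ^ m) T = Q ^ m"
    by (simp add: Q0_def Q_def pcompose_power_left pcompose_sum pcompose_diff pcompose_1 pcompose_X_left)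
  ultimately obtain V where V: "V \<in> Zbq b" "(T - 1)^K dvd (Q^m - pcompose (pcompose V T) (monom 1 b))"
    using frob_surjective_mod_qN_minus_1_power[OF b, of "Q0 ^ m" N K] unfolding T_def by auto
  define W where "W = pcompose V T"
  define u where "u = monom 1 c * W"
  have u: "u \<in> Zbq b" unfolding u_def W_def T_def using V(1) b
    by (intro Zbq_mult Zbq_monom Zbq_pcompose Zb_1) auto
  have "pcompose u (monom 1 b) = monom 1 (b*c) * pcompose W (monom 1 b)"
    by (simp add: u_def pcompose_mult pcompose_monom_one monom_power mult.commute)
  also have "monom 1 (b*c) = [:0,1:] * T^m"
    unfolding cm T_def monom_one_eq_X_power by (simp add: power_mult)
  finally have "pcompose u (monom 1 b) - [:0,1:]
     = [:0,1:] * T^m * (pcompose W (monom 1 b) - Q^m) - [:0,1:] * (1 - (T*Q)^m)"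
    by (simp add: power_mult_distrib algebra_simps)
  moreover have "(T - 1)^K dvd (pcompose W (monom 1 b) - Q^m)"
    using V(2) unfolding W_def by (metis dvd_minus_iff minus_diff_eq)
  moreover have "(T - 1)^K dvd (1 - (T * Q)^m)"
    unfolding Q_def by (rule truncated_geometric_inverse)
  ultimately have "(T - 1)^K dvd pcompose u (monom 1 b) - [:0,1:]"
    by (metis dvd_diff dvd_mult dvd_mult2)
  thus ?thesis using u unfolding T_def by blast
qed

section \<open>Testing divisibility in Q[q] by complex roots\<close>

definition cpoly :: "rat poly \<Rightarrow> complex poly" where
  "cpoly p = map_poly of_rat p"

lemma coeff_cpoly: "coeff (cpoly p) n = of_rat (coeff p n)"
  by (simp add: cpoly_def coeff_map_poly)
lemma cpoly_0: "cpoly 0 = 0" by (rule poly_eqI) (simp add: coeff_cpoly)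
lemma cpoly_1: "cpoly 1 = 1" by (rule poly_eqI) (simp add: coeff_cpoly coeff_1)
lemma cpoly_add: "cpoly (p + q) = cpoly p + cpoly q"
  by (rule poly_eqI) (simp add: coeff_cpoly of_rat_add)
lemma cpoly_diff: "cpoly (p - q) = cpoly p - cpoly q"
  by (rule poly_eqI) (simp add: coeff_cpoly of_rat_diff)
lemma cpoly_mult: "cpoly (p * q) = cpoly p * cpoly q"
  by (rule poly_eqI) (simp add: coeff_cpoly coeff_mult of_rat_sum of_rat_mult)
lemma cpoly_eq_0_iff: "cpoly p = 0 \<longleftrightarrow> p = 0"
  by (simp add: poly_eq_iff coeff_cpoly)
lemma cpoly_prod: "cpoly (prod f A) = (\<Prod>x\<in>A. cpoly (f x))"
  by (induction A rule: infinite_finite_induct) (simp_all add: cpoly_1 cpoly_mult)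
lemma cpoly_pCons: "cpoly (pCons a p) = pCons (of_rat a) (cpoly p)"
  by (rule poly_eqI) (simp add: coeff_cpoly coeff_pCons split: nat.split)
lemma cpoly_pcompose: "cpoly (pcompose p q) = pcompose (cpoly p) (cpoly q)"
  by (induction p) (simp_all add: pcompose_pCons cpoly_add cpoly_mult cpoly_pCons cpoly_0)
lemma cpoly_monom: "cpoly (monom c n) = monom (of_rat c) n"
  by (rule poly_eqI) (simp add: coeff_cpoly coeff_monom)
lemma degree_cpoly: "degree (cpoly p) = degree p"
  unfolding cpoly_def by (rule degree_map_poly) simp

text \<open>Divisibility of rational polynomials is unchanged by passing to C: the remainder
  of the division over Q would be a nonzero multiple of cpoly p of smaller degree.\<close>
lemma cpoly_dvd_iff: "cpoly p dvd cpoly q \<longleftrightarrow> p dvd q"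
proof
  assume "p dvd q" thus "cpoly p dvd cpoly q" by (auto simp: cpoly_mult elim!: dvdE)
next
  assume d: "cpoly p dvd cpoly q"
  show "p dvd q"
  proof (cases "p = 0")
    case True then show ?thesis using d by (simp add: cpoly_0 cpoly_eq_0_iff)
  next
    case False
    obtain k where k: "cpoly q = cpoly p * k" using d by (auto elim: dvdE)
    define r where "r = q mod p"
    have "cpoly q = cpoly (q div p) * cpoly p + cpoly r"
      by (simp add: r_def cpoly_add[symmetric] cpoly_mult[symmetric])
    with k have r: "cpoly r = cpoly p * (k - cpoly (q div p))" by (simp add: algebra_simps)
    show ?thesis
    proof (rule ccontr)
      assume nd: "\<not> p dvd q"
      hence "r \<noteq> 0" by (simp add: r_def mod_eq_0_iff_dvd)
      hence "k - cpoly (q div p) \<noteq> 0" using r by (auto simp: cpoly_eq_0_iff)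
      hence "degree (cpoly r) = degree (cpoly p) + degree (k - cpoly (q div p))"
        unfolding r using False by (intro degree_mult_eq) (auto simp: cpoly_eq_0_iff)
      moreover have "degree r < degree p"
        using False nd \<open>r \<noteq> 0\<close> by (simp add: r_def degree_mod_less_degree)
      ultimately show False by (simp add: degree_cpoly)
    qed
  qed
qed

text \<open>Since C is algebraically closed, p | q as soon as every complex root of p is a root
  of q of at least the same multiplicity.\<close>
lemma dvd_by_complex_orders:
  assumes p: "p \<noteq> 0" and q: "q \<noteq> 0"
    and le: "\<And>a. order a (cpoly p) \<le> order a (cpoly q)"
  shows "p dvd q"
proof -
  have nz: "cpoly p \<noteq> 0" "cpoly q \<noteq> 0" using p q by (auto simp: cpoly_eq_0_iff)
  have sub: "proots (cpoly p) \<subseteq># proots (cpoly q)"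
    by (rule mset_subset_eqI) (simp add: nz le)
  have "(\<Prod>x\<in>#proots (cpoly p). [:-x, 1:]) dvd (\<Prod>x\<in>#proots (cpoly q). [:-x, 1:])"
    by (intro prod_mset_subset_imp_dvd image_mset_subseteq_mono sub)
  hence "(\<Prod>x\<in>#proots (cpoly p). [:-x, 1:]) dvd cpoly q"
    by (subst complex_poly_decompose_multiset[symmetric]) (rule dvd_smult)
  hence "cpoly p dvd cpoly q"
    using nz by (subst complex_poly_decompose_multiset[symmetric]) (simp add: smult_dvd_iff)
  thus ?thesis by (simp add: cpoly_dvd_iff)
qed

section \<open>Primitive roots of unity\<close>

definition prim_roots :: "nat \<Rightarrow> complex set" where
  "prim_roots n = {z. n > 0 \<and> (\<forall>k. z ^ k = 1 \<longleftrightarrow> n dvd k)}"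

lemma prim_roots_pos: "z \<in> prim_roots n \<Longrightarrow> n > 0" by (simp add: prim_roots_def)
lemma prim_roots_power_eq_1: "z \<in> prim_roots n \<Longrightarrow> z ^ k = 1 \<longleftrightarrow> n dvd k"
  by (simp add: prim_roots_def)

lemma prim_roots_nonzero: "z \<in> prim_roots n \<Longrightarrow> z \<noteq> 0"
  using prim_roots_power_eq_1[of z n n] prim_roots_pos[of z n] by (auto simp: power_0_left)

lemma prim_roots_unique: "z \<in> prim_roots n \<Longrightarrow> z \<in> prim_roots m \<Longrightarrow> n = m"
  using prim_roots_power_eq_1[of z n n] prim_roots_power_eq_1[of z n m]
        prim_roots_power_eq_1[of z m m] prim_roots_power_eq_1[of z m n]
  by (auto intro: dvd_antisym)

lemma finite_prim_roots: "finite (prim_roots n)"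
proof (cases "n > 0")
  case True
  have "prim_roots n \<subseteq> {z. z ^ n = 1}" using prim_roots_power_eq_1 by auto
  thus ?thesis using finite_roots_unity[of n] True by (auto intro: finite_subset)
qed (simp add: prim_roots_def)

lemma root_of_unity_is_prim_root:
  assumes n: "n > 0" "z ^ n = 1"
  shows "\<exists>d. d dvd n \<and> z \<in> prim_roots d"
proof -
  define d where "d = (LEAST k. k > 0 \<and> z ^ k = 1)"
  have d: "d > 0" "z ^ d = 1"
    using LeastI[of "\<lambda>k. k > 0 \<and> z ^ k = 1" n] n by (auto simp: d_def)
  have iff: "z ^ k = 1 \<longleftrightarrow> d dvd k" for k
  proof
    assume zk: "z ^ k = 1"
    have "z ^ k = z ^ (d * (k div d)) * z ^ (k mod d)" by (simp add: power_add[symmetric])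
    hence "z ^ (k mod d) = 1" using zk d by (simp add: power_mult)
    moreover have "k mod d < d" using d by simp
    hence "\<not> (k mod d > 0 \<and> z ^ (k mod d) = 1)" using not_less_Least[of "k mod d"] d_def by blast
    ultimately show "d dvd k" by (simp add: mod_eq_0_iff_dvd)
  next
    assume "d dvd k" thus "z ^ k = 1" using d by (auto simp: power_mult elim!: dvdE)
  qed
  thus ?thesis using d n by (auto simp: prim_roots_def)
qed

lemma roots_of_unity_eq_UN:
  assumes "n > 0" shows "{z. z ^ n = 1} = (\<Union>d\<in>{d. d dvd n}. prim_roots d)"
  using root_of_unity_is_prim_root[OF assms] prim_roots_power_eq_1 by auto

lemma prim_roots_power:
  assumes "z \<in> prim_roots n" "coprime n b" shows "z ^ b \<in> prim_roots n"
proof -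
  have "(z ^ b) ^ k = 1 \<longleftrightarrow> n dvd k" for k
    using prim_roots_power_eq_1[OF assms(1), of "b * k"] assms(2)
    by (simp add: power_mult coprime_dvd_mult_right_iff)
  thus ?thesis using prim_roots_pos[OF assms(1)] by (simp add: prim_roots_def)
qed

lemma prim_roots_has_root:
  assumes z: "z \<in> prim_roots n" and cop: "coprime n b" and b: "b \<ge> 1"
  shows "\<exists>w\<in>prim_roots n. w ^ b = z"
proof -
  obtain c m where cm: "b * c = n * m + 1"
    using bezout_nat[of b n] b cop by (auto simp: coprime_iff_gcd_eq_1 gcd.commute)
  have "coprime n c"
    using cm by (metis coprime_add_one_right coprime_commute coprime_mult_left_iff)
  hence w: "z ^ c \<in> prim_roots n" by (rule prim_roots_power[OF z])
  have "(z ^ c) ^ b = z ^ (n * m) * z" by (simp add: power_mult[symmetric] mult.commute cm)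
  also have "z ^ (n * m) = 1" using prim_roots_power_eq_1[OF z] by simp
  finally show ?thesis using w by auto
qed

lemma order_simple_root:
  fixes p :: "'a::{idom,semiring_char_0} poly"
  assumes "poly p a = 0" "poly (pderiv p) a \<noteq> 0"
  shows "order a p = 1"
proof -
  have "p \<noteq> 0" using assms(2) by auto
  thus ?thesis using order_pderiv[OF _ assms(1)] order_0I[OF assms(2)] by simp
qed

lemma order_power:
  fixes p :: "'a::idom poly"
  assumes "p \<noteq> 0" shows "order a (p ^ k) = k * order a p"
  using assms by (induction k) (simp_all add: order_mult)

text \<open>The key computation: the order of a \<noteq> 0 as a root of p(q^b) is the order of a^b as a
  root of p, because q^b - a^b has a simple root at a.\<close>
lemma order_pcompose_monom:
  fixes p :: "'a::{idom,semiring_char_0} poly"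
  assumes p: "p \<noteq> 0" and a: "a \<noteq> 0" and b: "b \<ge> 1"
  shows "order a (pcompose p (monom 1 b)) = order (a ^ b) p"
proof -
  define k where "k = order (a ^ b) p"
  obtain r where r: "p = [:-(a ^ b),1:]^k * r" "\<not> [:-(a ^ b),1:] dvd r"
    using order_decomp[OF p, of "a ^ b"] k_def by auto
  have r0: "poly (pcompose r (monom 1 b)) a \<noteq> 0"
    using r(2) poly_eq_0_iff_dvd by (auto simp: poly_pcompose poly_monom)
  define L where "L = monom 1 b - [:a ^ b:]"
  have L: "pcompose [:-(a ^ b),1:] (monom 1 b) = L" by (simp add: L_def pcompose_pCons)
  have "pderiv L = monom (of_nat b) (b - 1)" by (simp add: L_def pderiv_diff pderiv_monom)
  hence dL: "poly (pderiv L) a \<noteq> 0" using a b by (simp add: poly_monom)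
  have oL: "order a L = 1" by (rule order_simple_root) (use dL in \<open>simp_all add: L_def poly_monom\<close>)
  have nz: "L \<noteq> 0" "pcompose r (monom 1 b) \<noteq> 0" using dL r0 by auto
  have "pcompose p (monom 1 b) = L^k * pcompose r (monom 1 b)"
    by (subst r(1)) (simp add: pcompose_mult pcompose_power_left L)
  also have "order a \<dots> = k"
    using nz by (simp add: order_mult order_power oL order_0I[OF r0])
  finally show ?thesis by (simp add: k_def)
qed

lemma proots_X_power_minus_1:
  assumes n: "n > 0"
  shows "proots (monom 1 n - 1 :: complex poly) = mset_set {z. z ^ n = 1}"
proof (rule multiset_eqI)
  fix z :: complex
  have "poly (monom 1 n - 1 :: complex poly) 0 \<noteq> 0" using n by (simp add: poly_monom power_0_left)
  hence nz: "monom 1 n - 1 \<noteq> (0::complex poly)" by auto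
  have fin: "finite {z::complex. z ^ n = 1}" using n by (intro finite_roots_unity) simp
  have "order z (monom 1 n - 1) = (if z ^ n = 1 then 1 else 0)"
  proof (cases "z ^ n = 1")
    case True
    hence "z \<noteq> 0" using n by (cases n) auto
    hence "poly (pderiv (monom 1 n - 1 :: complex poly)) z \<noteq> 0"
      using n by (simp add: pderiv_diff pderiv_monom poly_monom)
    thus ?thesis using True by (simp add: order_simple_root poly_monom)
  qed (simp add: order_0I poly_monom)
  thus "count (proots (monom 1 n - 1)) z = count (mset_set {z. z ^ n = 1}) z"
    using nz fin by simp
qed

lemma mset_set_UN_disjoint:
  assumes "finite I" "\<And>i. i \<in> I \<Longrightarrow> finite (A i)"
    and "\<And>i j. i \<in> I \<Longrightarrow> j \<in> I \<Longrightarrow> i \<noteq> j \<Longrightarrow> A i \<inter> A j = {}"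
  shows "mset_set (\<Union>i\<in>I. A i) = (\<Sum>i\<in>I. mset_set (A i))"
  using assms
proof (induction I rule: finite_induct)
  case (insert x I)
  have "A x \<inter> (\<Union>i\<in>I. A i) = {}" using insert.prems(2) insert.hyps(2) by blast
  hence "mset_set (A x \<union> (\<Union>i\<in>I. A i)) = mset_set (A x) + mset_set (\<Union>i\<in>I. A i)"
    using insert.hyps(1) insert.prems(1) by (intro mset_set_Union) auto
  thus ?case using insert by simp
qed simp

lemma proots_X_power_minus_1_split:
  assumes n: "n > 0"
  shows "proots (monom 1 n - 1 :: complex poly)
           = mset_set (prim_roots n) + (\<Sum>d\<in>{d. d dvd n \<and> d < n}. mset_set (prim_roots d))"
proof -
  define D where "D = {d. d dvd n \<and> d < n}"
  have D: "finite D" "n \<notin> D" "{d. d dvd n} = insert n D"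
    using n by (auto simp: D_def dest: dvd_imp_le intro: finite_subset[of _ "{..<n}"])
  have "proots (monom 1 n - 1 :: complex poly) = mset_set (\<Union>d\<in>insert n D. prim_roots d)"
    using proots_X_power_minus_1[OF n] roots_of_unity_eq_UN[OF n] D(3) by simp
  also have "\<dots> = (\<Sum>d\<in>insert n D. mset_set (prim_roots d))"
    using D(1) by (intro mset_set_UN_disjoint finite_prim_roots) (auto dest: prim_roots_unique)
  finally show ?thesis using D(1,2) by (simp add: D_def)
qed

section \<open>Cyclotomic polynomials\<close>

lemma X_power_minus_1_props:
  assumes "n > 0"
  shows "(monom 1 n - 1 :: rat poly) \<in> Zbq 1" "lead_coeff (monom 1 n - 1 :: rat poly) = 1"
proof -
  show "(monom 1 n - 1 :: rat poly) \<in> Zbq 1" by (intro Zbq_diff Zbq_monom Zbq_1 Zb_1) auto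
  have "degree (monom 1 n + (-1) :: rat poly) = n"
    using assms by (subst degree_add_eq_left) (simp_all add: degree_monom_eq)
  thus "lead_coeff (monom 1 n - 1 :: rat poly) = 1" using assms by simp
qed

text \<open>The basic facts on Phi_n, by strong induction on n along the defining recursion
  (q^n - 1) = Phi_n \<cdot> P with P the product of Phi_d over the proper divisors d of n:
  Phi_n is monic with integer coefficients and its complex roots are exactly the primitive
  n-th roots of unity, each simple.  Since the roots of q^n - 1 are the n-th roots of unity,
  all simple, and these split according to their order, P divides q^n - 1 and the quotient
  Phi_n carries the remaining roots.\<close>
lemma cyclo_props:
  "n > 0 \<Longrightarrow> cyclo n \<in> Zbq 1 \<and> lead_coeff (cyclo n) = 1
             \<and> proots (cpoly (cyclo n)) = mset_set (prim_roots n)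
             \<and> cyclo n dvd monom 1 n - 1"
proof (induction n rule: less_induct)
  case (less n)
  define D where "D = {d. d dvd n \<and> d < n}"
  define P where "P = (\<Prod>d\<in>D. cyclo d)"
  define Xn where "Xn = (monom 1 n - 1 :: rat poly)"
  have D: "\<And>d. d \<in> D \<Longrightarrow> d > 0" using less.prems by (auto simp: D_def intro: Nat.gr0I)
  have IH: "cyclo d \<in> Zbq 1" "lead_coeff (cyclo d) = 1"
           "proots (cpoly (cyclo d)) = mset_set (prim_roots d)" if "d \<in> D" for d
    using less.IH[of d] D[OF that] that by (auto simp: D_def)
  have P: "P \<in> Zbq 1" "lead_coeff P = 1" unfolding P_def using IH
    by (auto intro: Zbq_prod simp: lead_coeff_prod)
  have "cpoly (cyclo d) \<noteq> 0" if "d \<in> D" for d using IH(2)[OF that] by (auto simp: cpoly_eq_0_iff)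
  hence roots_P: "proots (cpoly P) = (\<Sum>d\<in>D. mset_set (prim_roots d))"
    unfolding P_def cpoly_prod using IH(3) by (simp add: proots_prod)
  have roots_Xn: "proots (cpoly Xn) = mset_set (prim_roots n) + proots (cpoly P)"
    using proots_X_power_minus_1_split[OF less.prems]
    by (simp add: roots_P Xn_def D_def cpoly_diff cpoly_monom cpoly_1)
  have Xn: "Xn \<in> Zbq 1" "lead_coeff Xn = 1"
    using X_power_minus_1_props[OF less.prems] by (simp_all add: Xn_def)
  have nz: "P \<noteq> 0" "Xn \<noteq> 0" "cpoly P \<noteq> 0" "cpoly Xn \<noteq> 0"
    using P(2) Xn(2) by (auto simp: cpoly_eq_0_iff)
  have "P dvd Xn"
  proof (rule dvd_by_complex_orders[OF nz(1,2)])
    fix a show "order a (cpoly P) \<le> order a (cpoly Xn)"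
      using roots_Xn count_proots[OF nz(3), of a] count_proots[OF nz(4), of a] by simp
  qed
  moreover have "cyclo n = Xn div P"
    using less.prems by (subst cyclo.simps) (simp add: Xn_def P_def D_def)
  ultimately have eq: "cyclo n * P = Xn" by simp
  have "cyclo n \<in> Zbq 1"
    using Zbq_cofactor_of_monic[of 1 P Xn] P Xn eq by (auto simp: mult.commute)
  moreover have lc: "lead_coeff (cyclo n) = 1"
    using arg_cong[OF eq, of lead_coeff] P Xn by (simp add: lead_coeff_mult)
  moreover have "proots (cpoly (cyclo n)) = mset_set (prim_roots n)"
  proof -
    have "cpoly (cyclo n) \<noteq> 0" using lc by (auto simp: cpoly_eq_0_iff)
    hence "proots (cpoly Xn) = proots (cpoly (cyclo n)) + proots (cpoly P)"
      using nz eq by (metis cpoly_mult proots_mult)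
    thus ?thesis using roots_Xn by simp
  qed
  moreover have "cyclo n dvd monom 1 n - 1" using eq unfolding Xn_def by (metis dvd_triv_left)
  ultimately show ?case by blast
qed

text \<open>In a product of cyclotomic polynomials Phi_{n_1} \<cdots> Phi_{n_k}, the multiplicity of a
  complex root a is the number of indices i for which a is a primitive n_i-th root of unity.\<close>
definition prim_count :: "nat list \<Rightarrow> complex \<Rightarrow> nat" where
  "prim_count ns a = length (filter (\<lambda>n. a \<in> prim_roots n) ns)"

lemma cyclo_product_props:
  assumes "set ns \<subseteq> {n. n > 0}"
  shows "prod_list (map cyclo ns) \<in> Zbq 1 \<and> lead_coeff (prod_list (map cyclo ns)) = 1
     \<and> (\<forall>a. order a (cpoly (prod_list (map cyclo ns))) = prim_count ns a)"
  using assms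
proof (induction ns)
  case Nil then show ?case by (simp add: Zbq_1 cpoly_1 prim_count_def)
next
  case (Cons n ns)
  have c: "cyclo n \<in> Zbq 1" "lead_coeff (cyclo n) = 1"
          "proots (cpoly (cyclo n)) = mset_set (prim_roots n)"
    using cyclo_props[of n] Cons.prems by auto
  have nz: "cpoly (cyclo n) \<noteq> 0" "cpoly (prod_list (map cyclo ns)) \<noteq> 0"
    using c(2) Cons by (auto simp: cpoly_eq_0_iff)
  have "order a (cpoly (cyclo n)) = (if a \<in> prim_roots n then 1 else 0)" for a
    using count_proots[OF nz(1), of a] c(3) by (simp add: count_mset_set' finite_prim_roots)
  thus ?case using Cons c nz
    by (simp add: cpoly_mult lead_coeff_mult Zbq_mult order_mult prim_count_def)
qed

lemma PhiStar_props:
  assumes "f \<in> PhiStar (Nb b)"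
  shows "f \<in> Zbq b" "lead_coeff f = 1" "f \<noteq> 0"
proof -
  obtain ns where ns: "set ns \<subseteq> Nb b" "f = prod_list (map cyclo ns)"
    using assms unfolding PhiStar_def by auto
  have "set ns \<subseteq> {n. n > 0}" using ns(1) by (auto simp: Nb_def)
  thus "f \<in> Zbq b" "lead_coeff f = 1"
    using cyclo_product_props ns(2) Zbq_one_subset by auto
  thus "f \<noteq> 0" by auto
qed

lemma order_PhiStar_const:
  assumes "f \<in> PhiStar S" "S \<subseteq> {n. n > 0}" "a \<in> prim_roots n" "w \<in> prim_roots n"
  shows "order a (cpoly f) = order w (cpoly f)"
proof -
  obtain ns where ns: "set ns \<subseteq> S" "f = prod_list (map cyclo ns)"
    using assms(1) unfolding PhiStar_def by auto
  have "prim_count ns a = prim_count ns w" unfolding prim_count_def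
    by (intro arg_cong[where f=length] filter_cong refl) (metis assms(3,4) prim_roots_unique)
  thus ?thesis using cyclo_product_props[of ns] ns assms(2) by auto
qed

lemma order_PhiStar_nonzero:
  assumes "f \<in> PhiStar S" "S \<subseteq> {n. n > 0}" "order a (cpoly f) \<noteq> 0"
  obtains n where "n \<in> S" "a \<in> prim_roots n"
proof -
  obtain ns where ns: "set ns \<subseteq> S" "f = prod_list (map cyclo ns)"
    using assms(1) unfolding PhiStar_def by auto
  have "prim_count ns a \<noteq> 0" using cyclo_product_props[of ns] ns assms(2,3) by auto
  thus ?thesis using ns(1) that by (auto simp: prim_count_def filter_empty_conv)
qed

lemma PhiStar_dvd_X_power_minus_1_power:
  assumes "f \<in> PhiStar (Nb b)"
  obtains N K where "coprime b N" "f dvd (monom 1 N - 1)^K"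
proof -
  obtain ns where ns: "set ns \<subseteq> Nb b" "f = prod_list (map cyclo ns)"
    using assms unfolding PhiStar_def by auto
  define N where "N = prod_list ns"
  have "coprime b N" unfolding N_def
    by (rule prod_list_coprime_right) (use ns(1) in \<open>auto simp: Nb_def coprime_commute\<close>)
  moreover have "prod_list (map cyclo ms) dvd (monom 1 N - 1)^(length ms)"
    if "set ms \<subseteq> set ns" for ms
    using that
  proof (induction ms)
    case (Cons n ms)
    have "n > 0" "n dvd N" using Cons.prems ns(1) by (auto simp: Nb_def N_def prod_list_dvd)
    hence "cyclo n dvd monom 1 N - 1"
      using cyclo_props[of n] X_power_minus_1_dvd[of n N] by (auto intro: dvd_trans)
    thus ?case using Cons by (auto intro: mult_dvd_mono)
  qed simp
  ultimately show ?thesis using that ns(2) by blast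
qed

section \<open>The Frobenius on a single level Z[1/b][q]/(f)\<close>

lemma Nb_pos: "Nb b \<subseteq> {n. n > 0}" by (auto simp: Nb_def)

lemma cpoly_frob: "cpoly (pcompose p (monom 1 b)) = pcompose (cpoly p) (monom 1 b)"
  by (simp add: cpoly_pcompose cpoly_monom)

lemma pcompose_monom_nonzero:
  fixes p :: "'a::idom poly"
  assumes "p \<noteq> 0" "b \<ge> 1" shows "pcompose p (monom 1 b) \<noteq> 0"
  using assms by (simp add: pcompose_eq_0_iff degree_monom_eq)

text \<open>f | f(q^b): at a root a of f, a primitive n-th root with n coprime to b, the order of a
  in f(q^b) is the order of the primitive n-th root a^b in f, which is the order of a in f.\<close>
lemma PhiStar_dvd_frob:
  assumes b: "b \<ge> 1" and f: "f \<in> PhiStar (Nb b)"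
  shows "f dvd pcompose f (monom 1 b)"
proof (rule dvd_by_complex_orders)
  have f0: "f \<noteq> 0" "cpoly f \<noteq> 0" using PhiStar_props(3)[OF f] by (auto simp: cpoly_eq_0_iff)
  show "f \<noteq> 0" "pcompose f (monom 1 b) \<noteq> 0" using f0 pcompose_monom_nonzero b by auto
  fix a show "order a (cpoly f) \<le> order a (cpoly (pcompose f (monom 1 b)))"
  proof (cases "order a (cpoly f) = 0")
    case False
    then obtain n where n: "n \<in> Nb b" "a \<in> prim_roots n"
      using order_PhiStar_nonzero[OF f Nb_pos] by blast
    have "order a (cpoly (pcompose f (monom 1 b))) = order (a ^ b) (cpoly f)"
      using order_pcompose_monom[OF f0(2) prim_roots_nonzero[OF n(2)] b] by (simp add: cpoly_frob)
    also have "\<dots> = order a (cpoly f)"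
      using n by (intro order_PhiStar_const[OF f Nb_pos] prim_roots_power) (auto simp: Nb_def)
    finally show ?thesis by simp
  qed simp
qed

text \<open>f | z(q^b) implies f | z: a root a of f, a primitive n-th root, is w^b for another
  primitive n-th root w, and the order of w in z(q^b) is the order of a in z.\<close>
lemma PhiStar_frob_cancel:
  assumes b: "b \<ge> 1" and f: "f \<in> PhiStar (Nb b)" and d: "f dvd pcompose z (monom 1 b)"
  shows "f dvd z"
proof (cases "z = 0")
  case False
  show ?thesis
  proof (rule dvd_by_complex_orders[OF PhiStar_props(3)[OF f] False])
    have z0: "cpoly z \<noteq> 0" using False by (simp add: cpoly_eq_0_iff)
    fix a show "order a (cpoly f) \<le> order a (cpoly z)"
    proof (cases "order a (cpoly f) = 0")
      case False
      then obtain n where n: "n \<in> Nb b" "a \<in> prim_roots n"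
        using order_PhiStar_nonzero[OF f Nb_pos] by blast
      then obtain w where w: "w \<in> prim_roots n" "w ^ b = a"
        using prim_roots_has_root[OF n(2) _ b] n(1) by (auto simp: Nb_def)
      have "order a (cpoly f) = order w (cpoly f)"
        using order_PhiStar_const[OF f Nb_pos n(2) w(1)] .
      also have "\<dots> \<le> order w (pcompose (cpoly z) (monom 1 b))"
        using d pcompose_monom_nonzero[OF z0 b]
        by (intro dvd_imp_order_le) (auto simp: cpoly_frob[symmetric] cpoly_dvd_iff)
      also have "\<dots> = order a (cpoly z)"
        using order_pcompose_monom[OF z0 prim_roots_nonzero[OF w(1)] b] w(2) by simp
      finally show ?thesis .
    qed simp
  qed
qed simp

lemma frob_poly_Zbq: "b \<ge> 1 \<Longrightarrow> p \<in> Zbq b \<Longrightarrow> frob_poly b p \<in> Zbq b"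
  unfolding frob_poly_def by (intro Zbq_pcompose Zbq_monom Zb_1)

lemma frob_poly_diff: "frob_poly b (p - q) = frob_poly b p - frob_poly b q"
  by (simp add: frob_poly_def pcompose_diff)

lemma dvdb_frob_poly:
  assumes b: "b \<ge> 1" and f: "f \<in> PhiStar (Nb b)" and d: "dvdb b f p"
  shows "dvdb b f (frob_poly b p)"
proof -
  obtain h where h: "h \<in> Zbq b" "p = f * h" using d unfolding dvdb_def by auto
  have fZ: "f \<in> Zbq b" "lead_coeff f = 1" using PhiStar_props[OF f] by auto
  obtain k where k: "frob_poly b f = f * k"
    using PhiStar_dvd_frob[OF b f] unfolding frob_poly_def by (auto elim: dvdE)
  have "k \<in> Zbq b" by (rule Zbq_cofactor_of_monic[OF b fZ frob_poly_Zbq[OF b fZ(1)] k])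
  hence "k * frob_poly b h \<in> Zbq b" by (rule Zbq_mult[OF b _ frob_poly_Zbq[OF b h(1)]])
  moreover have "frob_poly b p = f * (k * frob_poly b h)"
    using k h(2) by (simp add: frob_poly_def pcompose_mult mult.assoc)
  ultimately show ?thesis unfolding dvdb_def by blast
qed

text \<open>A polynomial u with f | u(q^b) - q is a right inverse of the Frobenius modulo f:
  p(u) is a preimage of p.\<close>
lemma frob_poly_pcompose_inverse:
  assumes "f dvd pcompose u (monom 1 b) - [:0,1:]"
  shows "f dvd frob_poly b (pcompose p u) - p"
proof -
  have "(pcompose u (monom 1 b) - [:0,1:]) dvd
        (pcompose p (pcompose u (monom 1 b)) - pcompose p [:0,1:])"
    by (rule pcompose_diff_dvd)
  thus ?thesis using assms by (auto simp: frob_poly_def pcompose_assoc intro: dvd_trans)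
qed

lemma PhiStar_frob_preimage_of_q:
  assumes b: "b \<ge> 1" and f: "f \<in> PhiStar (Nb b)"
  shows "\<exists>u\<in>Zbq b. f dvd (pcompose u (monom 1 b) - [:0,1:])"
proof -
  obtain N K where "coprime b N" "f dvd (monom 1 N - 1)^K"
    using PhiStar_dvd_X_power_minus_1_power[OF f] .
  thus ?thesis using frob_preimage_of_q_mod_qN_minus_1_power[OF b, of N K] by (auto intro: dvd_trans)
qed

section \<open>The Frobenius on the inverse limit\<close>

lemma dvdb_PhiStar_iff:
  "b \<ge> 1 \<Longrightarrow> f \<in> PhiStar (Nb b) \<Longrightarrow> p \<in> Zbq b \<Longrightarrow> dvdb b f p \<longleftrightarrow> f dvd p"
  using dvdb_iff_dvd PhiStar_props by blast

lemma invlim_Zbq: "x \<in> invlim b S \<Longrightarrow> f \<in> PhiStar S \<Longrightarrow> x f \<in> Zbq b"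
  by (simp add: invlim_def)

lemma limeq_refl: "limeq b S x x"
  unfolding limeq_def dvdb_def using Zbq_0 by (auto intro!: bexI[of _ 0])

lemma Frob_invlim:
  assumes b: "b \<ge> 1" and x: "x \<in> invlim b (Nb b)"
  shows "Frob b x \<in> invlim b (Nb b)"
  unfolding invlim_def
proof (intro CollectI conjI ballI impI)
  fix f assume "f \<in> PhiStar (Nb b)"
  thus "Frob b x f \<in> Zbq b" using frob_poly_Zbq[OF b] invlim_Zbq[OF x] by (simp add: Frob_def)
next
  fix f g assume f: "f \<in> PhiStar (Nb b)" and "g \<in> PhiStar (Nb b)" "dvdb b f g"
  hence "dvdb b f (x g - x f)" using x f by (auto simp: invlim_def)
  hence "dvdb b f (frob_poly b (x g - x f))" by (rule dvdb_frob_poly[OF b f])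
  thus "dvdb b f (Frob b x g - Frob b x f)" by (simp add: Frob_def frob_poly_diff)
qed

lemma Frob_limeq:
  assumes b: "b \<ge> 1" and xy: "limeq b (Nb b) x y"
  shows "limeq b (Nb b) (Frob b x) (Frob b y)"
  unfolding limeq_def
proof
  fix f assume f: "f \<in> PhiStar (Nb b)"
  hence "dvdb b f (x f - y f)" using xy by (auto simp: limeq_def)
  hence "dvdb b f (frob_poly b (x f - y f))" by (rule dvdb_frob_poly[OF b f])
  thus "dvdb b f (Frob b x f - Frob b y f)" by (simp add: Frob_def frob_poly_diff)
qed

lemma Frob_add: "Frob b (\<lambda>f. x f + y f) = (\<lambda>f. Frob b x f + Frob b y f)"
  by (simp add: Frob_def frob_poly_def pcompose_add)

lemma Frob_mult: "Frob b (\<lambda>f. x f * y f) = (\<lambda>f. Frob b x f * Frob b y f)"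
  by (simp add: Frob_def frob_poly_def pcompose_mult)

lemma Frob_1: "Frob b (\<lambda>f. 1) = (\<lambda>f. 1)"
  by (simp add: Frob_def frob_poly_def pcompose_1)

lemma Frob_smult: "Frob b (\<lambda>f. smult c (x f)) = (\<lambda>f. smult c (Frob b x f))"
  by (simp add: Frob_def frob_poly_def pcompose_smult)

lemma Frob_injective:
  assumes b: "b \<ge> 1" and x: "x \<in> invlim b (Nb b)" and y: "y \<in> invlim b (Nb b)"
    and e: "limeq b (Nb b) (Frob b x) (Frob b y)"
  shows "limeq b (Nb b) x y"
  unfolding limeq_def
proof
  fix f assume f: "f \<in> PhiStar (Nb b)"
  have "dvdb b f (Frob b x f - Frob b y f)" using e f by (auto simp: limeq_def)
  hence "f dvd pcompose (x f - y f) (monom 1 b)"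
    by (simp add: Frob_def frob_poly_def pcompose_diff dvdb_imp_dvd)
  hence "f dvd x f - y f" by (rule PhiStar_frob_cancel[OF b f])
  thus "dvdb b f (x f - y f)"
    using dvdb_PhiStar_iff[OF b f] Zbq_diff[OF b] invlim_Zbq[OF x f] invlim_Zbq[OF y f] by blast
qed

text \<open>Surjectivity: choosing for each level f a Frobenius preimage u_f of q modulo f, the
  family x_f = y_f(u_f) is coherent (by injectivity on each level) and maps to y.\<close>
lemma Frob_surjective:
  assumes b: "b \<ge> 1" and y: "y \<in> invlim b (Nb b)"
  shows "\<exists>x\<in>invlim b (Nb b). limeq b (Nb b) (Frob b x) y"
proof -
  obtain u where u: "\<forall>f\<in>PhiStar (Nb b).
      u f \<in> Zbq b \<and> f dvd (pcompose (u f) (monom 1 b) - [:0,1:])"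
  proof -
    have "\<forall>f\<in>PhiStar (Nb b). \<exists>u. u \<in> Zbq b \<and> f dvd (pcompose u (monom 1 b) - [:0,1:])"
      using PhiStar_frob_preimage_of_q[OF b] by blast
    thus ?thesis using that bchoice by metis
  qed
  define x where "x = (\<lambda>f. pcompose (y f) (u f))"
  have xZ: "x f \<in> Zbq b" if "f \<in> PhiStar (Nb b)" for f
    using u that invlim_Zbq[OF y that] b by (auto simp: x_def intro: Zbq_pcompose)
  have preimage: "f dvd frob_poly b (x f) - y f" if "f \<in> PhiStar (Nb b)" for f
    unfolding x_def using u that by (auto intro: frob_poly_pcompose_inverse)
  have "x \<in> invlim b (Nb b)" unfolding invlim_def
  proof (intro CollectI conjI ballI impI)
    fix f assume "f \<in> PhiStar (Nb b)" thus "x f \<in> Zbq b" by (rule xZ)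
  next
    fix f g assume f: "f \<in> PhiStar (Nb b)" and g: "g \<in> PhiStar (Nb b)" and fg: "dvdb b f g"
    have "frob_poly b (x g - x f) = (frob_poly b (x g) - y g) - (frob_poly b (x f) - y f) + (y g - y f)"
      by (simp add: frob_poly_diff)
    moreover have "f dvd frob_poly b (x g) - y g"
      using preimage[OF g] dvdb_imp_dvd[OF fg] by (auto intro: dvd_trans)
    moreover have "f dvd y g - y f" using y f g fg by (auto simp: invlim_def dest: dvdb_imp_dvd)
    ultimately have "f dvd frob_poly b (x g - x f)" using preimage[OF f] by (metis dvd_add dvd_diff)
    hence "f dvd x g - x f" unfolding frob_poly_def by (rule PhiStar_frob_cancel[OF b f])
    thus "dvdb b f (x g - x f)" using dvdb_PhiStar_iff[OF b f] Zbq_diff[OF b xZ[OF g] xZ[OF f]] by blast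
  qed
  moreover have "limeq b (Nb b) (Frob b x) y" unfolding limeq_def
  proof
    fix f assume f: "f \<in> PhiStar (Nb b)"
    have "Frob b x f - y f \<in> Zbq b"
      using frob_poly_Zbq[OF b xZ[OF f]] invlim_Zbq[OF y f] b by (auto simp: Frob_def intro: Zbq_diff)
    thus "dvdb b f (Frob b x f - y f)" using preimage[OF f] dvdb_PhiStar_iff[OF b f] by (simp add: Frob_def)
  qed
  ultimately show ?thesis by blast
qed

theorem theorem13:
  fixes b :: nat
  assumes "b \<ge> 1"
  shows
    \<comment> \<open>well-defined on each finite level Z[1/b][q]/(f), f in Phi*_{N_b}\<close>
    "(\<forall>f\<in>PhiStar (Nb b). \<forall>p\<in>Zbq b. dvdb b f p \<longrightarrow> dvdb b f (frob_poly b p))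
     \<and> (\<forall>x\<in>invlim b (Nb b). Frob b x \<in> invlim b (Nb b))
     \<and> (\<forall>x y. limeq b (Nb b) x y \<longrightarrow> limeq b (Nb b) (Frob b x) (Frob b y))
     \<comment> \<open>Z[1/b]-algebra homomorphism\<close>
     \<and> (\<forall>x\<in>invlim b (Nb b). \<forall>y\<in>invlim b (Nb b).
          limeq b (Nb b) (Frob b (\<lambda>f. x f + y f)) (\<lambda>f. Frob b x f + Frob b y f)
        \<and> limeq b (Nb b) (Frob b (\<lambda>f. x f * y f)) (\<lambda>f. Frob b x f * Frob b y f))
     \<and> limeq b (Nb b) (Frob b (\<lambda>f. 1)) (\<lambda>f. 1)
     \<and> (\<forall>c\<in>Zb b. \<forall>x\<in>invlim b (Nb b).
          limeq b (Nb b) (Frob b (\<lambda>f. smult c (x f))) (\<lambda>f. smult c (Frob b x f)))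
     \<comment> \<open>bijective\<close>
     \<and> (\<forall>x\<in>invlim b (Nb b). \<forall>y\<in>invlim b (Nb b).
          limeq b (Nb b) (Frob b x) (Frob b y) \<longrightarrow> limeq b (Nb b) x y)
     \<and> (\<forall>y\<in>invlim b (Nb b). \<exists>x\<in>invlim b (Nb b). limeq b (Nb b) (Frob b x) y)"
proof (intro conjI ballI allI impI)
  show "dvdb b f (frob_poly b p)" if "f \<in> PhiStar (Nb b)" "dvdb b f p" for f p
    using dvdb_frob_poly[OF assms that] .
  show "Frob b x \<in> invlim b (Nb b)" if "x \<in> invlim b (Nb b)" for x
    using Frob_invlim[OF assms that] .
  show "limeq b (Nb b) (Frob b x) (Frob b y)" if "limeq b (Nb b) x y" for x y
    using Frob_limeq[OF assms that] .
  show "limeq b (Nb b) x y"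
    if "x \<in> invlim b (Nb b)" "y \<in> invlim b (Nb b)" "limeq b (Nb b) (Frob b x) (Frob b y)" for x y
    using Frob_injective[OF assms that] .
  show "\<exists>x\<in>invlim b (Nb b). limeq b (Nb b) (Frob b x) y" if "y \<in> invlim b (Nb b)" for y
    using Frob_surjective[OF assms that] .
qed (simp_all only: Frob_add Frob_mult Frob_1 Frob_smult limeq_refl)

end
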